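(* Let $\epsilon,\epsilon_0,\epsilon_\theta\in[0,1]$ and $\theta\in\mathbb R$. If $$\frac{\epsilon}{2-\epsilon}+\epsilon_0+\epsilon_\theta-2\ge 0,$$ then the three qubit POVMs $\mathsf N^{\rm prono}$, $\mathsf Q_0^{\rm prono}$ and $\mathsf Q_\theta^{\rm prono}$ (with noise parameters $\epsilon$, $\epsilon_0$, $\epsilon_\theta$ respectively) are jointly measurable. Moreover, if $\epsilon=\epsilon_0=\epsilon_\theta\ge 4/7$, then these three POVMs are jointly measurable.
   Context: All operators act on $\mathbb C^2$ (the span of the number states $|0\rangle,|1\rangle$). For $\varphi\in\mathbb R$ and noise $\delta\in[0,1]$, the noisy projected quadrature POVM on Borel sets $X\subseteq\mathbb R$ is $$\mathsf Q_\varphi^{\rm prono}(X)=\int_X\begin{pmatrix}1&(1-\delta)\sqrt2\,x\,e^{-i\varphi}\\(1-\delta)\sqrt2\,x\,e^{i\varphi}&(1-\delta)2x^2+\delta\end{pmatrix}\frac{e^{-x^2}\,dx}{\sqrt\pi},$$ with $\delta=\epsilon_0$ for $\varphi=0$ and $\delta=\epsilon_\theta$ for $\varphi=\theta$. The noisy projected number POVM has outcomes $\{0,1\}$: $\mathsf N^{\rm prono}_0=\begin{pmatrix}1-\epsilon/2&0\\0&\epsilon/2\end{pmatrix}$, $\mathsf N^{\rm prono}_1=\begin{pmatrix}\epsilon/2&0\\0&1-\epsilon/2\end{pmatrix}$. Three POVMs are jointly measurable if there is a POVM $\mathsf G$ on $\{0,1\}\times\mathbb R\times\mathbb R$ (product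 Borel $\sigma$-algebra) whose three marginals are $\mathsf N^{\rm prono}(\{n\})=\mathsf G(\{n\}\times\mathbb R\times\mathbb R)$, $\mathsf Q_0^{\rm prono}(X)=\mathsf G(\{0,1\}\times X\times\mathbb R)$, $\mathsf Q_\theta^{\rm prono}(Y)=\mathsf G(\{0,1\}\times\mathbb R\times Y)$. *)

theory Defs
  imports "HOL-Analysis.Analysis"
begin

text \<open>Operators on the two-dimensional space spanned by number states 0,1 are
  represented as complex 2x2 matrices (index 1 = state 0, index 2 = state 1).\<close>

type_synonym cmat2 = "complex^2^2"

definition mat2 :: "complex \<Rightarrow> complex \<Rightarrow> complex \<Rightarrow> complex \<Rightarrow> cmat2" where
  "mat2 a b c d = vector [vector [a, b], vector [c, d]]"

definition psd2 :: "cmat2 \<Rightarrow> bool" where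
  "psd2 M \<longleftrightarrow> (\<forall>v::complex^2. let q = (\<Sum>i\<in>UNIV. cnj (v $ i) * (M *v v) $ i)
                                  in Im q = 0 \<and> Re q \<ge> 0)"

definition povm :: "'a measure \<Rightarrow> ('a set \<Rightarrow> cmat2) \<Rightarrow> bool" where
  "povm M G \<longleftrightarrow>
     (\<forall>A\<in>sets M. psd2 (G A)) \<and> G (space M) = mat 1 \<and>
     (\<forall>F::nat \<Rightarrow> 'a set. range F \<subseteq> sets M \<longrightarrow> disjoint_family F \<longrightarrow>
         (\<lambda>n. G (F n)) sums G (\<Union>n. F n))"

definition quad_density :: "real \<Rightarrow> real \<Rightarrow> real \<Rightarrow> cmat2" where
  "quad_density \<delta> \<phi> x =
     (exp (- x\<^sup>2) / sqrt pi) *\<^sub>R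
     mat2 1
          (complex_of_real ((1 - \<delta>) * sqrt 2 * x) * exp (- \<i> * complex_of_real \<phi>))
          (complex_of_real ((1 - \<delta>) * sqrt 2 * x) * exp (\<i> * complex_of_real \<phi>))
          (complex_of_real ((1 - \<delta>) * 2 * x\<^sup>2 + \<delta>))"

definition quad_povm :: "real \<Rightarrow> real \<Rightarrow> real set \<Rightarrow> cmat2" where
  "quad_povm \<delta> \<phi> X = (\<chi> i j. LINT x:X|lborel. quad_density \<delta> \<phi> x $ i $ j)"

definition num_povm :: "real \<Rightarrow> nat \<Rightarrow> cmat2" where
  "num_povm \<epsilon> n =
     (if n = 0 then mat2 (complex_of_real (1 - \<epsilon>/2)) 0 0 (complex_of_real (\<epsilon>/2))
      else mat2 (complex_of_real (\<epsilon>/2)) 0 0 (complex_of_real (1 - \<epsilon>/2)))"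

definition joint_space :: "(nat \<times> real \<times> real) measure" where
  "joint_space = count_space {0, 1} \<Otimes>\<^sub>M (borel \<Otimes>\<^sub>M borel)"

definition jointly_measurable_prono :: "real \<Rightarrow> real \<Rightarrow> real \<Rightarrow> real \<Rightarrow> bool" where
  "jointly_measurable_prono \<epsilon> \<epsilon>0 \<epsilon>\<theta> \<theta> \<longleftrightarrow>
     (\<exists>G. povm joint_space G \<and>
        (\<forall>n\<in>{0,1}. num_povm \<epsilon> n = G ({n} \<times> UNIV \<times> UNIV)) \<and>
        (\<forall>X\<in>sets borel. quad_povm \<epsilon>0 0 X = G ({0,1} \<times> X \<times> UNIV)) \<and>
        (\<forall>Y\<in>sets borel. quad_povm \<epsilon>\<theta> \<theta> Y = G ({0,1} \<times> UNIV \<times> Y)))"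

end

theory Submission
  imports Defs "HOL-Probability.Distributions"
begin

text \<open>
  The joint observable has an explicit density on \<open>{0,1} \<times> \<real> \<times> \<real>\<close>. With weight \<open>1 - \<epsilon>\<^sub>0\<close> it
  measures \<open>Q\<^sub>0\<close> sharply while \<open>Q\<^sub>\<theta>\<close> only produces Gaussian noise, with weight \<open>1 - \<epsilon>\<^sub>\<theta>\<close> the
  roles are exchanged, with weight \<open>p\<close> the number is measured sharply, and the rest is pure noise.
  On top of this the Gaussian factor of a sharply measured quadrature is split between the number
  outcomes \<open>n = 0, 1\<close> as \<open>gauss/2 + k gauss_tilt\<close> and \<open>gauss/2 - k gauss_tilt\<close>. The two halves add
  up to \<open>gauss\<close>, so the quadrature marginals do not notice the split, while the moments
  \<open>1/6, 0, -1/12\<close> of \<open>gauss_tilt\<close> sharpen the number marginal by \<open>k (2 - \<epsilon>\<^sub>0 - \<epsilon>\<^sub>\<theta>) / 3\<close>.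
  Positivity of the density only needs \<open>|k| \<le> 1\<close> (as \<open>|gauss_tilt| \<le> gauss/2\<close>) and nonnegative weights
  of total mass at most one. The first claim takes \<open>k = 0\<close>, \<open>p = 1 - \<epsilon>\<close>; the second takes \<open>k = 1\<close>,
  \<open>p = (1 - \<epsilon>)/3\<close>, which is admissible precisely for \<open>\<epsilon> \<ge> 4/7\<close>.
\<close>

section \<open>Gaussian weights\<close>

definition gauss :: "real \<Rightarrow> real" where
  "gauss = normal_density 0 (1 / sqrt 2)"

definition gauss_tilt :: "real \<Rightarrow> real" where
  "gauss_tilt x = 2/3 * normal_density 0 (1/2) x - gauss x / 2"

lemma gauss_eq: "gauss x = exp (- x\<^sup>2) / sqrt pi"
  by (simp add: gauss_def normal_density_def power_divide)

lemma gauss_nonneg: "0 \<le> gauss x"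
  by (simp add: gauss_def)

lemma abs_gauss_tilt_le: "\<bar>gauss_tilt x\<bar> \<le> gauss x / 2"
proof -
  have "sqrt 2 \<le> 3/2"
    by (rule real_le_lsqrt) (auto simp: power2_eq_square)
  moreover have "exp (- 2 * x\<^sup>2) \<le> exp (- x\<^sup>2)"
    by simp
  ultimately have le: "(2/3 * sqrt 2) * exp (- 2 * x\<^sup>2) \<le> 1 * exp (- x\<^sup>2)"
    by (intro mult_mono) auto
  have "2/3 * normal_density 0 (1/2) x = (2/3 * sqrt 2) * exp (- 2 * x\<^sup>2) / sqrt pi"
    by (simp add: normal_density_def power2_eq_square real_sqrt_divide real_sqrt_mult field_simps)
  also have "\<dots> \<le> 1 * exp (- x\<^sup>2) / sqrt pi"
    using le by (rule divide_right_mono) simp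
  finally have "2/3 * normal_density 0 (1/2) x \<le> gauss x"
    by (simp add: gauss_eq)
  moreover have "0 \<le> normal_density 0 (1/2) x"
    by simp
  ultimately show ?thesis
    unfolding gauss_tilt_def by linarith
qed

lemma integrable_normal_moment_centered:
  assumes "0 < \<sigma>"
  shows "integrable lborel (\<lambda>x. x ^ m * normal_density 0 \<sigma> x)"
  using integrable_normal_moment[OF assms, of 0 m] by (simp add: mult.commute)

lemma integrable_gauss_moment: "integrable lborel (\<lambda>x. x ^ m * gauss x)"
  unfolding gauss_def by (rule integrable_normal_moment_centered) simp

lemma integrable_gauss_tilt_moment: "integrable lborel (\<lambda>x. x ^ m * gauss_tilt x)"
proof -
  have "integrable lborel (\<lambda>x. 2/3 * (x ^ m * normal_density 0 (1/2) x) - x ^ m * gauss x / 2)"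
    using integrable_normal_moment_centered[of "1/2" m] integrable_gauss_moment[of m] by auto
  then show ?thesis
    by (simp add: gauss_tilt_def algebra_simps)
qed

lemma normal_moments_centered:
  assumes "0 < \<sigma>"
  shows "(\<integral>x. normal_density 0 \<sigma> x \<partial>lborel) = 1"
    and "(\<integral>x. x * normal_density 0 \<sigma> x \<partial>lborel) = 0"
    and "(\<integral>x. x\<^sup>2 * normal_density 0 \<sigma> x \<partial>lborel) = \<sigma>\<^sup>2"
  using integral_normal_moment_odd[OF assms, of 0 0] integral_normal_moment_even[OF assms, of 0 1]
  by (simp_all add: mult.commute assms)

lemma gauss_moments:
  "(\<integral>x. gauss x \<partial>lborel) = 1"
  "(\<integral>x. x * gauss x \<partial>lborel) = 0"
  "(\<integral>x. x\<^sup>2 * gauss x \<partial>lborel) = 1/2"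
  using normal_moments_centered[of "1 / sqrt 2"] by (simp_all add: gauss_def power_divide)

lemma gauss_tilt_moments:
  "(\<integral>x. gauss_tilt x \<partial>lborel) = 1/6"
  "(\<integral>x. x * gauss_tilt x \<partial>lborel) = 0"
  "(\<integral>x. x\<^sup>2 * gauss_tilt x \<partial>lborel) = -1/12"
proof -
  have n: "integrable lborel (\<lambda>x. x ^ m * normal_density 0 (1/2) x)" for m
    by (rule integrable_normal_moment_centered) simp
  have "(\<integral>x. x ^ m * gauss_tilt x \<partial>lborel)
      = 2/3 * (\<integral>x. x ^ m * normal_density 0 (1/2) x \<partial>lborel) - (\<integral>x. x ^ m * gauss x \<partial>lborel) / 2" for m
    using n[of m] integrable_gauss_moment[of m]
    by (simp add: gauss_tilt_def right_diff_distrib mult.left_commute)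
  from this[of 0] this[of 1] this[of 2] show
    "(\<integral>x. gauss_tilt x \<partial>lborel) = 1/6"
    "(\<integral>x. x * gauss_tilt x \<partial>lborel) = 0"
    "(\<integral>x. x\<^sup>2 * gauss_tilt x \<partial>lborel) = -1/12"
    using normal_moments_centered[of "1/2"] gauss_moments by (simp_all add: power2_eq_square)
qed

definition tilted_gauss :: "real \<Rightarrow> nat \<Rightarrow> real \<Rightarrow> real" where
  "tilted_gauss k n x = gauss x / 2 + (if n = 0 then k else - k) * gauss_tilt x"

lemma tilted_gauss_nonneg: "\<bar>k\<bar> \<le> 1 \<Longrightarrow> 0 \<le> tilted_gauss k n x"
proof -
  assume "\<bar>k\<bar> \<le> 1"
  then have "\<bar>(if n = 0 then k else - k) * gauss_tilt x\<bar> \<le> 1 * (gauss x / 2)"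
    unfolding abs_mult by (intro mult_mono abs_gauss_tilt_le) auto
  then show ?thesis
    unfolding tilted_gauss_def by linarith
qed

lemma tilted_gauss_sum: "tilted_gauss k 0 x + tilted_gauss k 1 x = gauss x"
  by (simp add: tilted_gauss_def)

lemma integrable_tilted_gauss_moment: "integrable lborel (\<lambda>x. x ^ m * tilted_gauss k n x)"
proof -
  have "integrable lborel (\<lambda>x. x ^ m * gauss x / 2 + (if n = 0 then k else - k) * (x ^ m * gauss_tilt x))"
    using integrable_gauss_moment[of m] integrable_gauss_tilt_moment[of m] by auto
  then show ?thesis
    by (simp add: tilted_gauss_def algebra_simps)
qed

lemma tilted_gauss_moments:
  fixes k :: real and n :: nat
  defines "s \<equiv> if n = 0 then k else - k"
  shows "(\<integral>x. tilted_gauss k n x \<partial>lborel) = 1/2 + s/6"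
    and "(\<integral>x. x * tilted_gauss k n x \<partial>lborel) = 0"
    and "(\<integral>x. x\<^sup>2 * tilted_gauss k n x \<partial>lborel) = 1/4 - s/12"
proof -
  have "(\<integral>x. x ^ m * tilted_gauss k n x \<partial>lborel)
      = (\<integral>x. x ^ m * gauss x \<partial>lborel) / 2 + s * (\<integral>x. x ^ m * gauss_tilt x \<partial>lborel)" for m
    using integrable_gauss_moment[of m] integrable_gauss_tilt_moment[of m]
    by (simp add: tilted_gauss_def s_def distrib_left mult.left_commute)
  from this[of 0] this[of 1] this[of 2] show
    "(\<integral>x. tilted_gauss k n x \<partial>lborel) = 1/2 + s/6"
    "(\<integral>x. x * tilted_gauss k n x \<partial>lborel) = 0"
    "(\<integral>x. x\<^sup>2 * tilted_gauss k n x \<partial>lborel) = 1/4 - s/12"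
    using gauss_moments gauss_tilt_moments by simp_all
qed

section \<open>Positive 2 \<times> 2 matrices\<close>

lemma mat2_eq_iff: "mat2 a b c d = mat2 a' b' c' d' \<longleftrightarrow> a = a' \<and> b = b' \<and> c = c' \<and> d = d'"
  by (auto simp: vec_eq_iff forall_2 mat2_def)

lemma mat2_add: "mat2 a b c d + mat2 a' b' c' d' = mat2 (a + a') (b + b') (c + c') (d + d')"
  by (simp add: vec_eq_iff forall_2 mat2_def)

lemma scaleR_mat2: "r *\<^sub>R mat2 a b c d = mat2 (of_real r * a) (of_real r * b) (of_real r * c) (of_real r * d)"
  unfolding mat2_def by (simp add: vec_eq_iff forall_2) (simp add: scaleR_conv_of_real)

lemma mat_one_eq_mat2: "(mat 1 :: cmat2) = mat2 1 0 0 1"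
  by (simp add: vec_eq_iff forall_2 mat_def mat2_def)

lemmas mat2_simps = mat2_eq_iff mat2_add scaleR_mat2 mat_one_eq_mat2

definition quad_form :: "complex^2 \<Rightarrow> cmat2 \<Rightarrow> complex" where
  "quad_form v M = (\<Sum>i\<in>UNIV. cnj (v $ i) * (M *v v) $ i)"

lemma psd2_iff_quad_form: "psd2 M \<longleftrightarrow> (\<forall>v. Im (quad_form v M) = 0 \<and> 0 \<le> Re (quad_form v M))"
  by (simp add: psd2_def quad_form_def Let_def)

lemma bounded_linear_quad_form: "bounded_linear (quad_form v)"
proof -
  have "quad_form v = (\<lambda>M. \<Sum>i\<in>UNIV. \<Sum>j\<in>UNIV. cnj (v $ i) * v $ j * M $ i $ j)"
    by (simp add: fun_eq_iff quad_form_def matrix_vector_mult_def sum_distrib_left mult_ac)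
  moreover have "bounded_linear (\<lambda>M::cmat2. c * M $ i $ j)" for c i j
    using bounded_linear_compose[OF bounded_linear_vec_nth bounded_linear_vec_nth]
    by (rule bounded_linear_compose[OF bounded_linear_mult_right])
  ultimately show ?thesis
    by (simp add: bounded_linear_sum)
qed

lemma psd2_add: "psd2 A \<Longrightarrow> psd2 B \<Longrightarrow> psd2 (A + B)"
  using linear_simps(1)[OF bounded_linear_quad_form] by (simp add: psd2_iff_quad_form)

lemma psd2_scaleR: "0 \<le> r \<Longrightarrow> psd2 A \<Longrightarrow> psd2 (r *\<^sub>R A)"
  using linear_simps(5)[OF bounded_linear_quad_form] by (simp add: psd2_iff_quad_form)

text \<open>The rank-one operator \<open>|u\<rangle>\<langle>u|\<close> for \<open>u = |0\<rangle> + a|1\<rangle>\<close>.\<close>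

definition dyad :: "complex \<Rightarrow> cmat2" where
  "dyad a = mat2 1 (cnj a) a (of_real ((cmod a)\<^sup>2))"

definition diag2 :: "real \<Rightarrow> real \<Rightarrow> cmat2" where
  "diag2 a b = mat2 (of_real a) 0 0 (of_real b)"

lemma diag2_add: "diag2 a b + diag2 a' b' = diag2 (a + a') (b + b')"
  by (simp add: diag2_def mat2_add)

lemma scaleR_diag2: "r *\<^sub>R diag2 a b = diag2 (r * a) (r * b)"
  by (simp add: diag2_def scaleR_mat2)

lemma mat_one_eq_diag2: "mat 1 = diag2 1 1"
  by (simp add: diag2_def mat_one_eq_mat2)

lemma diag2_eq_iff: "diag2 a b = diag2 c d \<longleftrightarrow> a = c \<and> b = d"
  by (simp add: diag2_def mat2_eq_iff)

lemma psd2_dyad: "psd2 (dyad a)"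
proof -
  have "quad_form v (dyad a) = of_real ((cmod (v $ 1 + cnj a * v $ 2))\<^sup>2)" for v
    unfolding quad_form_def dyad_def complex_norm_square
    by (simp add: mat2_def matrix_vector_mult_def sum_2 algebra_simps)
  then show ?thesis
    by (simp add: psd2_iff_quad_form del: of_real_power)
qed

lemma psd2_diag2: "0 \<le> a \<Longrightarrow> 0 \<le> b \<Longrightarrow> psd2 (diag2 a b)"
proof -
  assume "0 \<le> a" "0 \<le> b"
  moreover have "quad_form v (diag2 a b) = of_real a * (v $ 1 * cnj (v $ 1)) + of_real b * (v $ 2 * cnj (v $ 2))" for v
    by (simp add: quad_form_def diag2_def mat2_def matrix_vector_mult_def sum_2 mult_ac)
  ultimately show ?thesis
    by (simp add: psd2_iff_quad_form complex_norm_square[symmetric] del: of_real_power)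
qed

section \<open>Operator-valued set integrals\<close>

lemma set_integral_bounded_linear:
  assumes "bounded_linear T" "set_integrable M S f"
  shows "(LINT x:S|M. T (f x)) = T (LINT x:S|M. f x)"
  using integral_bounded_linear[OF assms(1) assms(2)[unfolded set_integrable_def]]
  by (simp add: set_lebesgue_integral_def linear_simps(5)[OF assms(1)])

lemma set_integral_UNIV: "(LINT x:UNIV|M. f x) = integral\<^sup>L M f"
  by (simp add: set_lebesgue_integral_def)

lemma psd2_set_integral:
  assumes "set_integrable M S D" and "\<And>x. x \<in> S \<Longrightarrow> psd2 (D x)"
  shows "psd2 (LINT x:S|M. D x)"
  unfolding psd2_iff_quad_form
proof
  fix v
  have lin: "bounded_linear (\<lambda>A. Re (quad_form v A))" "bounded_linear (\<lambda>A. Im (quad_form v A))"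
    by (auto intro: bounded_linear_compose[OF _ bounded_linear_quad_form] bounded_linear_Re bounded_linear_Im)
  have "Im (quad_form v (LINT x:S|M. D x)) = (LINT x:S|M. Im (quad_form v (D x)))"
    using set_integral_bounded_linear[OF lin(2) assms(1)] ..
  also have "\<dots> = 0"
    using assms(2) by (auto simp: set_lebesgue_integral_def psd2_iff_quad_form
        intro!: integral_eq_zero_AE split: split_indicator)
  finally have "Im (quad_form v (LINT x:S|M. D x)) = 0" .
  moreover have "Re (quad_form v (LINT x:S|M. D x)) = (LINT x:S|M. Re (quad_form v (D x)))"
    using set_integral_bounded_linear[OF lin(1) assms(1)] ..
  moreover have "0 \<le> (LINT x:S|M. Re (quad_form v (D x)))"
    using assms(2) by (auto simp: set_lebesgue_integral_def psd2_iff_quad_form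
        intro!: integral_nonneg split: split_indicator)
  ultimately show "Im (quad_form v (LINT x:S|M. D x)) = 0 \<and> 0 \<le> Re (quad_form v (LINT x:S|M. D x))"
    by simp
qed

lemma set_integral_sums:
  fixes f :: "_ \<Rightarrow> _ :: {banach, second_countable_topology}"
  assumes "integrable M f" "range A \<subseteq> sets M" "disjoint_family A"
  shows "(\<lambda>i. LINT x:A i|M. f x) sums (LINT x:(\<Union>i. A i)|M. f x)"
proof -
  have int: "set_integrable M B f" if "B \<in> sets M" for B
    using assms(1) that by (simp add: set_integrable_def integrable_mult_indicator)
  have "(\<Sum>i<m. LINT x:A i|M. f x) = (LINT x:(\<Union>i<m. A i)|M. f x)" for m
    using assms(2,3) int
    by (subst set_integral_finite_Union) (auto simp: disjoint_family_on_def)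
  moreover have "(\<lambda>m. LINT x:(\<Union>i<m. A i)|M. f x) \<longlonglongrightarrow> (LINT x:(\<Union>m. \<Union>i<m. A i)|M. f x)"
  proof (rule set_integral_cont_up)
    show "(\<Union>i<m. A i) \<in> sets M" for m
      using assms(2) by auto
    show "incseq (\<lambda>m. \<Union>i<m. A i)"
      by (rule monoI) (auto intro: order_less_le_trans)
    have "(\<Union>m. \<Union>i<m. A i) = (\<Union>i. A i)"
      by auto
    then show "set_integrable M (\<Union>m. \<Union>i<m. A i) f"
      using assms(2) by (auto intro: int)
  qed
  moreover have "(\<Union>m. \<Union>i<m. A i) = (\<Union>i. A i)"
    by auto
  ultimately show ?thesis
    by (simp add: sums_def)
qed

lemma povm_set_integral:
  assumes "sets N = sets M" "integrable M D" "\<And>x. x \<in> space M \<Longrightarrow> psd2 (D x)"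
    and "(LINT x:space M|M. D x) = mat 1"
  shows "povm N (\<lambda>S. LINT x:S|M. D x)"
  unfolding povm_def
proof (intro conjI ballI allI impI)
  fix S assume "S \<in> sets N"
  then have S: "S \<in> sets M"
    using assms(1) by simp
  then have "set_integrable M S D"
    unfolding set_integrable_def using assms(2) by (rule integrable_mult_indicator)
  moreover have "S \<subseteq> space M"
    using S by (rule sets.sets_into_space)
  ultimately show "psd2 (LINT x:S|M. D x)"
    using assms(3) by (intro psd2_set_integral) auto
next
  show "(LINT x:space N|M. D x) = mat 1"
    using sets_eq_imp_space_eq[OF assms(1)] assms(4) by simp
next
  fix A :: "nat \<Rightarrow> _" assume "range A \<subseteq> sets N" "disjoint_family A"
  with assms(1,2) show "(\<lambda>i. LINT x:A i|M. D x) sums (LINT x:(\<Union>i. A i)|M. D x)"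
    by (intro set_integral_sums) auto
qed

lemma set_integral_matrix_entries:
  fixes f :: "_ \<Rightarrow> 'a::euclidean_space^'n^'m"
  assumes "set_integrable M S f"
  shows "(\<chi> i j. LINT x:S|M. f x $ i $ j) = (LINT x:S|M. f x)"
proof -
  have "(LINT x:S|M. f x $ i $ j) = (LINT x:S|M. f x) $ i $ j" for i j
    using bounded_linear_compose[OF bounded_linear_vec_nth bounded_linear_vec_nth, of i j] assms
    by (rule set_integral_bounded_linear)
  then show ?thesis
    by (simp add: vec_eq_iff)
qed

section \<open>The quadrature densities\<close>

definition quad_dyad :: "real \<Rightarrow> real \<Rightarrow> cmat2" where
  "quad_dyad \<phi> x = dyad (of_real (sqrt 2 * x) * exp (\<i> * of_real \<phi>))"

lemma quad_dyad_eq: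
  "quad_dyad \<phi> x = mat2 1 (of_real (sqrt 2 * x) * exp (- \<i> * of_real \<phi>))
     (of_real (sqrt 2 * x) * exp (\<i> * of_real \<phi>)) (of_real (2 * x\<^sup>2))"
proof -
  have "cmod (of_real (sqrt 2 * x) * exp (\<i> * of_real \<phi>)) = sqrt 2 * \<bar>x\<bar>"
    by (simp add: norm_mult abs_mult)
  then show ?thesis
    by (simp add: quad_dyad_def dyad_def exp_cnj power_mult_distrib)
qed

lemma quad_density_eq: "quad_density \<delta> \<phi> x = gauss x *\<^sub>R ((1 - \<delta>) *\<^sub>R quad_dyad \<phi> x + \<delta> *\<^sub>R mat 1)"
  by (simp add: quad_density_def quad_dyad_eq gauss_eq mat2_simps algebra_simps)

lemma weighted_quad_dyad_expand:
  "w *\<^sub>R quad_dyad \<phi> x = w *\<^sub>R diag2 1 0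
     + (x * w) *\<^sub>R mat2 0 (of_real (sqrt 2) * exp (- \<i> * of_real \<phi>)) (of_real (sqrt 2) * exp (\<i> * of_real \<phi>)) 0
     + (x\<^sup>2 * w) *\<^sub>R diag2 0 2"
  by (simp add: quad_dyad_eq diag2_def mat2_simps algebra_simps)

lemma integrable_weighted_quad_dyad:
  assumes "integrable lborel w" "integrable lborel (\<lambda>x. x * w x)" "integrable lborel (\<lambda>x. x\<^sup>2 * w x)"
  shows "integrable lborel (\<lambda>x. w x *\<^sub>R quad_dyad \<phi> x)"
  unfolding weighted_quad_dyad_expand using assms by (intro Bochner_Integration.integrable_add integrable_scaleR_left)

lemma integral_weighted_quad_dyad:
  assumes "integrable lborel w" "integrable lborel (\<lambda>x. x * w x)" "integrable lborel (\<lambda>x. x\<^sup>2 * w x)"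
    and "(\<integral>x. x * w x \<partial>lborel) = 0"
  shows "(\<integral>x. w x *\<^sub>R quad_dyad \<phi> x \<partial>lborel) = diag2 (\<integral>x. w x \<partial>lborel) (2 * (\<integral>x. x\<^sup>2 * w x \<partial>lborel))"
  unfolding weighted_quad_dyad_expand using assms
  by (simp add: Bochner_Integration.integral_add integral_scaleR_left)
    (simp add: diag2_def mat2_simps)

lemma integrable_gauss_quad_dyad: "integrable lborel (\<lambda>x. gauss x *\<^sub>R quad_dyad \<phi> x)"
  using integrable_gauss_moment[of 0] integrable_gauss_moment[of 1] integrable_gauss_moment[of 2]
  by (intro integrable_weighted_quad_dyad) simp_all

lemma integral_gauss_quad_dyad: "(\<integral>x. gauss x *\<^sub>R quad_dyad \<phi> x \<partial>lborel) = mat 1"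
  using integrable_gauss_moment[of 0] integrable_gauss_moment[of 1] integrable_gauss_moment[of 2]
  by (subst integral_weighted_quad_dyad) (simp_all add: gauss_moments diag2_def mat2_simps)

lemma quad_povm_eq:
  assumes "X \<in> sets borel"
  shows "quad_povm \<delta> \<phi> X = (1 - \<delta>) *\<^sub>R (LINT x:X|lborel. gauss x *\<^sub>R quad_dyad \<phi> x)
      + (\<delta> * (LINT x:X|lborel. gauss x)) *\<^sub>R mat 1"
proof -
  have int: "set_integrable lborel X (\<lambda>x. gauss x *\<^sub>R quad_dyad \<phi> x)" "set_integrable lborel X gauss"
    using assms integrable_gauss_moment[of 0] unfolding set_integrable_def
    by (intro integrable_mult_indicator integrable_gauss_quad_dyad; simp)+
  have eq: "quad_density \<delta> \<phi> x = (1 - \<delta>) *\<^sub>R (gauss x *\<^sub>R quad_dyad \<phi> x) + (\<delta> * gauss x) *\<^sub>R mat 1" for x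
    by (simp add: quad_density_eq scaleR_add_right mult.commute)
  have "set_integrable lborel X (quad_density \<delta> \<phi>)"
    unfolding eq using int by (intro set_integral_add(1) set_integrable_scaleR_right set_integrable_scaleR_left
        set_integrable_mult_right) auto
  then have "quad_povm \<delta> \<phi> X = (LINT x:X|lborel. quad_density \<delta> \<phi> x)"
    unfolding quad_povm_def by (rule set_integral_matrix_entries)
  also have "\<dots> = (LINT x:X|lborel. (1 - \<delta>) *\<^sub>R (gauss x *\<^sub>R quad_dyad \<phi> x))
      + (LINT x:X|lborel. (\<delta> * gauss x) *\<^sub>R mat 1)"
    unfolding eq using int
    by (intro set_integral_add(2) set_integrable_scaleR_right set_integrable_scaleR_left set_integrable_mult_right)
  also have "\<dots> = (1 - \<delta>) *\<^sub>R (LINT x:X|lborel. gauss x *\<^sub>R quad_dyad \<phi> x)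
      + (\<delta> * (LINT x:X|lborel. gauss x)) *\<^sub>R mat 1"
    using assms integrable_gauss_moment[of 0] by (simp add: set_integral_scaleR_left del: scaleR_scaleR)
  finally show ?thesis .
qed

lemma quad_povm_UNIV: "quad_povm \<delta> \<phi> UNIV = mat 1"
  using integrable_gauss_moment[of 0]
  by (simp add: quad_povm_eq set_integral_UNIV integral_gauss_quad_dyad gauss_moments
      flip: scaleR_add_left)

lemma set_integral_tilted_gauss_sum:
  fixes F :: "real \<Rightarrow> _::{banach, second_countable_topology}"
  assumes "\<And>n. set_integrable lborel X (\<lambda>x. tilted_gauss k n x *\<^sub>R F x)"
  shows "(\<Sum>n\<in>{0, 1}. LINT x:X|lborel. tilted_gauss k n x *\<^sub>R F x) = (LINT x:X|lborel. gauss x *\<^sub>R F x)"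
proof -
  have "(\<Sum>n\<in>{0, 1}. LINT x:X|lborel. tilted_gauss k n x *\<^sub>R F x)
      = (LINT x:X|lborel. tilted_gauss k 0 x *\<^sub>R F x + tilted_gauss k 1 x *\<^sub>R F x)"
    using assms by (simp add: set_integral_add)
  then show ?thesis
    by (simp add: scaleR_add_left[symmetric] tilted_gauss_sum[unfolded One_nat_def])
qed

lemma integrable_tilted_quad_dyad: "integrable lborel (\<lambda>x. (c * tilted_gauss k n x) *\<^sub>R quad_dyad \<phi> x)"
proof -
  have "integrable lborel (\<lambda>x. c * (x ^ m * tilted_gauss k n x))" for m
    by (intro integrable_mult_right integrable_tilted_gauss_moment)
  from this[of 0] this[of 1] this[of 2] show ?thesis
    by (intro integrable_weighted_quad_dyad) (simp_all add: mult.left_commute)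
qed

lemma integral_tilted_quad_dyad:
  "(\<integral>x. (c * tilted_gauss k n x) *\<^sub>R quad_dyad \<phi> x \<partial>lborel)
     = c *\<^sub>R diag2 (1/2 + (if n = 0 then k else - k) / 6) (1/2 - (if n = 0 then k else - k) / 6)"
proof -
  have "(\<integral>x. (c * tilted_gauss k n x) *\<^sub>R quad_dyad \<phi> x \<partial>lborel)
      = c *\<^sub>R (\<integral>x. tilted_gauss k n x *\<^sub>R quad_dyad \<phi> x \<partial>lborel)"
    unfolding integral_scaleR_right[symmetric] by simp
  also have "(\<integral>x. tilted_gauss k n x *\<^sub>R quad_dyad \<phi> x \<partial>lborel)
     = diag2 (1/2 + (if n = 0 then k else - k) / 6) (1/2 - (if n = 0 then k else - k) / 6)"
    using integrable_tilted_gauss_moment[of 0] integrable_tilted_gauss_moment[of 1]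
      integrable_tilted_gauss_moment[of 2]
    by (subst integral_weighted_quad_dyad) (simp_all add: tilted_gauss_moments)
  finally show ?thesis .
qed

lemma sum_integral_tilted_quad_dyad:
  "(\<Sum>n\<in>{0, 1}. \<integral>x. (c * tilted_gauss k n x) *\<^sub>R quad_dyad \<phi> x \<partial>lborel) = c *\<^sub>R mat 1"
  by (simp add: integral_tilted_quad_dyad scaleR_diag2 diag2_add mat_one_eq_diag2 algebra_simps)

lemma set_integral_tilted_quad_dyad_add:
  assumes "Y \<in> sets borel"
  shows "(LINT y:Y|lborel. (c * tilted_gauss k n y) *\<^sub>R quad_dyad \<phi> y + gauss y *\<^sub>R M)
    = (LINT y:Y|lborel. (c * tilted_gauss k n y) *\<^sub>R quad_dyad \<phi> y) + (LINT y:Y|lborel. gauss y) *\<^sub>R M"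
proof -
  have "set_integrable lborel Y (\<lambda>y. (c * tilted_gauss k n y) *\<^sub>R quad_dyad \<phi> y)"
    "set_integrable lborel Y (\<lambda>y. gauss y *\<^sub>R M)"
    using assms integrable_tilted_quad_dyad integrable_gauss_moment[of 0]
    unfolding set_integrable_def by (intro integrable_mult_indicator integrable_scaleR_left; simp)+
  then show ?thesis
    using assms integrable_gauss_moment[of 0] by (simp add: set_integral_add set_integral_scaleR_left)
qed

lemma sum_set_integral_tilted_quad_dyad:
  assumes "X \<in> sets borel"
  shows "(\<Sum>n\<in>{0, 1}. LINT x:X|lborel. (c * tilted_gauss k n x) *\<^sub>R quad_dyad \<phi> x)
    = c *\<^sub>R (LINT x:X|lborel. gauss x *\<^sub>R quad_dyad \<phi> x)"
proof -
  have "(LINT x:X|lborel. (c * tilted_gauss k n x) *\<^sub>R quad_dyad \<phi> x)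
      = c *\<^sub>R (LINT x:X|lborel. tilted_gauss k n x *\<^sub>R quad_dyad \<phi> x)" for n
    unfolding set_integral_scaleR_right[symmetric] by simp
  moreover have "set_integrable lborel X (\<lambda>x. tilted_gauss k n x *\<^sub>R quad_dyad \<phi> x)" for n
    using assms integrable_tilted_quad_dyad[of 1] unfolding set_integrable_def
    by (intro integrable_mult_indicator) simp_all
  ultimately show ?thesis
    by (simp add: set_integral_tilted_gauss_sum[unfolded One_nat_def] del: sum.insert flip: scaleR_sum_right)
qed

section \<open>Integrals over \<open>{0,1} \<times> \<real> \<times> \<real>\<close>\<close>

lemma (in pair_sigma_finite) integral_product_scaleR:
  fixes F :: "_ \<Rightarrow> _::{banach, second_countable_topology}"
  assumes a: "integrable M1 a" and F: "integrable M2 F"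
  shows "integrable (M1 \<Otimes>\<^sub>M M2) (\<lambda>(x, y). a x *\<^sub>R F y)"
    and "(\<integral>(x, y). a x *\<^sub>R F y \<partial>(M1 \<Otimes>\<^sub>M M2)) = integral\<^sup>L M1 a *\<^sub>R integral\<^sup>L M2 F"
proof -
  have [measurable]: "a \<in> borel_measurable M1" "F \<in> borel_measurable M2"
    using a F by auto
  show int: "integrable (M1 \<Otimes>\<^sub>M M2) (\<lambda>(x, y). a x *\<^sub>R F y)"
  proof (rule Fubini_integrable)
    show "integrable M1 (\<lambda>x. \<integral>y. norm ((\<lambda>(x, y). a x *\<^sub>R F y) (x, y)) \<partial>M2)"
      using a by (simp add: integrable_abs)
  qed (use F in auto)
  have "(\<integral>(x, y). a x *\<^sub>R F y \<partial>(M1 \<Otimes>\<^sub>M M2)) = (\<integral>x. (\<integral>y. a x *\<^sub>R F y \<partial>M2) \<partial>M1)"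
    using integral_fst'[OF int] by simp
  then show "(\<integral>(x, y). a x *\<^sub>R F y \<partial>(M1 \<Otimes>\<^sub>M M2)) = integral\<^sup>L M1 a *\<^sub>R integral\<^sup>L M2 F"
    using a by (simp add: integral_scaleR_left)
qed

lemma (in pair_sigma_finite) integral_product_scaleR_swap:
  fixes F :: "_ \<Rightarrow> _::{banach, second_countable_topology}"
  assumes a: "integrable M2 a" and F: "integrable M1 F"
  shows "integrable (M1 \<Otimes>\<^sub>M M2) (\<lambda>(x, y). a y *\<^sub>R F x)"
    and "(\<integral>(x, y). a y *\<^sub>R F x \<partial>(M1 \<Otimes>\<^sub>M M2)) = integral\<^sup>L M2 a *\<^sub>R integral\<^sup>L M1 F"
proof -
  have [measurable]: "a \<in> borel_measurable M2" "F \<in> borel_measurable M1"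
    using a F by auto
  show int: "integrable (M1 \<Otimes>\<^sub>M M2) (\<lambda>(x, y). a y *\<^sub>R F x)"
  proof (rule Fubini_integrable)
    show "integrable M1 (\<lambda>x. \<integral>y. norm ((\<lambda>(x, y). a y *\<^sub>R F x) (x, y)) \<partial>M2)"
      using F by simp
  qed (use a in auto)
  have "(\<integral>(x, y). a y *\<^sub>R F x \<partial>(M1 \<Otimes>\<^sub>M M2)) = (\<integral>x. (\<integral>y. a y *\<^sub>R F x \<partial>M2) \<partial>M1)"
    using integral_fst'[OF int] by simp
  then show "(\<integral>(x, y). a y *\<^sub>R F x \<partial>(M1 \<Otimes>\<^sub>M M2)) = integral\<^sup>L M2 a *\<^sub>R integral\<^sup>L M1 F"
    using a by (simp add: integral_scaleR_left)
qed

lemma integral_count_space_pair: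
  fixes f :: "_ \<Rightarrow> _::{banach, second_countable_topology}"
  assumes A: "finite A" and M: "sigma_finite_measure M"
    and f: "\<And>n. n \<in> A \<Longrightarrow> integrable M (\<lambda>p. f (n, p))"
  shows "integrable (count_space A \<Otimes>\<^sub>M M) f"
    and "integral\<^sup>L (count_space A \<Otimes>\<^sub>M M) f = (\<Sum>n\<in>A. \<integral>p. f (n, p) \<partial>M)"
proof -
  interpret pair_sigma_finite "count_space A" M
    by (intro pair_sigma_finite.intro sigma_finite_measure_count_space_finite A M)
  have "f \<in> borel_measurable (count_space A \<Otimes>\<^sub>M M)"
    using A f by (intro measurable_pair_measure_countable1) (auto intro: countable_finite)
  then show int: "integrable (count_space A \<Otimes>\<^sub>M M) f"
    using A f by (intro Fubini_integrable) (auto simp: AE_count_space intro: integrable_count_space)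
  show "integral\<^sup>L (count_space A \<Otimes>\<^sub>M M) f = (\<Sum>n\<in>A. \<integral>p. f (n, p) \<partial>M)"
    using integral_fst'[OF int] A by (simp add: lebesgue_integral_count_space_finite)
qed

lemma (in pair_sigma_finite) set_integral_product_scaleR:
  fixes F :: "_ \<Rightarrow> _::{banach, second_countable_topology}"
    and G :: "_ \<Rightarrow> _::{banach, second_countable_topology}"
  assumes A: "A \<in> sets M1" and B: "B \<in> sets M2"
  shows "integrable M1 a \<Longrightarrow> integrable M2 F \<Longrightarrow>
      set_lebesgue_integral (M1 \<Otimes>\<^sub>M M2) (A \<times> B) (\<lambda>(x, y). a x *\<^sub>R F y)
        = (LINT x:A|M1. a x) *\<^sub>R (LINT y:B|M2. F y)"
    and "integrable M2 b \<Longrightarrow> integrable M1 G \<Longrightarrow>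
      set_lebesgue_integral (M1 \<Otimes>\<^sub>M M2) (A \<times> B) (\<lambda>(x, y). b y *\<^sub>R G x)
        = (LINT y:B|M2. b y) *\<^sub>R (LINT x:A|M1. G x)"
proof -
  assume "integrable M1 a" "integrable M2 F"
  then have "integrable M1 (\<lambda>x. indicator A x *\<^sub>R a x)" "integrable M2 (\<lambda>y. indicator B y *\<^sub>R F y)"
    using integrable_mult_indicator[OF A, of a] integrable_mult_indicator[OF B, of F] by simp_all
  moreover have "(\<lambda>p. indicator (A \<times> B) p *\<^sub>R (case p of (x, y) \<Rightarrow> a x *\<^sub>R F y))
      = (\<lambda>(x, y). (indicator A x *\<^sub>R a x) *\<^sub>R (indicator B y *\<^sub>R F y))"
    by (auto simp: fun_eq_iff indicator_times)
  ultimately show "set_lebesgue_integral (M1 \<Otimes>\<^sub>M M2) (A \<times> B) (\<lambda>(x, y). a x *\<^sub>R F y)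
      = (LINT x:A|M1. a x) *\<^sub>R (LINT y:B|M2. F y)"
    unfolding set_lebesgue_integral_def by (simp only: integral_product_scaleR(2))
next
  assume "integrable M2 b" "integrable M1 G"
  then have "integrable M2 (\<lambda>y. indicator B y *\<^sub>R b y)" "integrable M1 (\<lambda>x. indicator A x *\<^sub>R G x)"
    using integrable_mult_indicator[OF B, of b] integrable_mult_indicator[OF A, of G] by simp_all
  moreover have "(\<lambda>p. indicator (A \<times> B) p *\<^sub>R (case p of (x, y) \<Rightarrow> b y *\<^sub>R G x))
      = (\<lambda>(x, y). (indicator B y *\<^sub>R b y) *\<^sub>R (indicator A x *\<^sub>R G x))"
    by (auto simp: fun_eq_iff indicator_times)
  ultimately show "set_lebesgue_integral (M1 \<Otimes>\<^sub>M M2) (A \<times> B) (\<lambda>(x, y). b y *\<^sub>R G x)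
      = (LINT y:B|M2. b y) *\<^sub>R (LINT x:A|M1. G x)"
    unfolding set_lebesgue_integral_def by (simp only: integral_product_scaleR_swap(2))
qed

definition joint_lborel :: "(nat \<times> real \<times> real) measure" where
  "joint_lborel = count_space {0, 1} \<Otimes>\<^sub>M (lborel \<Otimes>\<^sub>M lborel)"

lemma sets_joint_lborel: "sets joint_lborel = sets joint_space"
  unfolding joint_lborel_def joint_space_def by (intro sets_pair_measure_cong) simp_all

lemma space_joint_lborel: "space joint_lborel = {0, 1} \<times> UNIV \<times> UNIV"
  by (simp add: joint_lborel_def space_pair_measure)

lemma set_integral_joint_lborel:
  fixes f :: "_ \<Rightarrow> _::{banach, second_countable_topology}"
  assumes f: "\<And>n. integrable (lborel \<Otimes>\<^sub>M lborel) (\<lambda>p. f (n, p))"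
    and N: "N \<subseteq> {0, 1}" and B: "B \<in> sets (lborel \<Otimes>\<^sub>M lborel)"
  shows "set_integrable joint_lborel (N \<times> B) f"
    and "set_lebesgue_integral joint_lborel (N \<times> B) f
      = (\<Sum>n\<in>N. set_lebesgue_integral (lborel \<Otimes>\<^sub>M lborel) B (\<lambda>p. f (n, p)))"
proof -
  have ind: "(\<lambda>\<omega>. indicator (N \<times> B) \<omega> *\<^sub>R f \<omega>)
      = (\<lambda>(n, p). indicator N n *\<^sub>R (indicator B p *\<^sub>R f (n, p)))"
    by (auto simp: fun_eq_iff indicator_times)
  have int: "integrable (lborel \<Otimes>\<^sub>M lborel) (\<lambda>p. indicator N n *\<^sub>R (indicator B p *\<^sub>R f (n, p)))" for n
    using f B by (intro integrable_scaleR_right integrable_mult_indicator) auto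
  have sf: "sigma_finite_measure (lborel \<Otimes>\<^sub>M lborel :: (real \<times> real) measure)"
    by (rule lborel_pair.sigma_finite_measure_axioms)
  note joint = integral_count_space_pair[OF _ sf, of "{0, 1}" "\<lambda>(n, p). indicator N n *\<^sub>R (indicator B p *\<^sub>R f (n, p))"]
  show "set_integrable joint_lborel (N \<times> B) f"
    unfolding set_integrable_def joint_lborel_def ind using joint(1) int by simp
  have "set_lebesgue_integral joint_lborel (N \<times> B) f
      = (\<Sum>n\<in>{0, 1}. \<integral>p. indicator N n *\<^sub>R (indicator B p *\<^sub>R f (n, p)) \<partial>(lborel \<Otimes>\<^sub>M lborel))"
    unfolding set_lebesgue_integral_def joint_lborel_def ind by (rule joint(2)[unfolded prod.case]) (simp, rule int)
  also have "\<dots> = (\<Sum>n\<in>N. set_lebesgue_integral (lborel \<Otimes>\<^sub>M lborel) B (\<lambda>p. f (n, p)))"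
    using N by (intro sum.mono_neutral_cong_right) (auto simp: set_lebesgue_integral_def)
  finally show "set_lebesgue_integral joint_lborel (N \<times> B) f
      = (\<Sum>n\<in>N. set_lebesgue_integral (lborel \<Otimes>\<^sub>M lborel) B (\<lambda>p. f (n, p)))" .
qed

section \<open>The joint density\<close>

text \<open>The weights \<open>l0\<close>, \<open>l\<theta>\<close> and \<open>p\<close> stand for \<open>1 - \<epsilon>\<^sub>0\<close>, \<open>1 - \<epsilon>\<^sub>\<theta>\<close> and the sharpness that
  the number marginal gets without the tilt.\<close>

definition number_part :: "real \<Rightarrow> real \<Rightarrow> real \<Rightarrow> nat \<Rightarrow> cmat2" where
  "number_part l0 l\<theta> p n = diag2 (p * of_bool (n = 0) + (1 - l0 - l\<theta> - p) / 2)
                                  (p * of_bool (n = 1) + (1 - l0 - l\<theta> - p) / 2)"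

definition joint_density :: "real \<Rightarrow> real \<Rightarrow> real \<Rightarrow> real \<Rightarrow> real \<Rightarrow> nat \<times> real \<times> real \<Rightarrow> cmat2" where
  "joint_density l0 l\<theta> p k \<theta> = (\<lambda>(n, x, y).
     (l0 * tilted_gauss k n x * gauss y) *\<^sub>R quad_dyad 0 x
   + (l\<theta> * gauss x * tilted_gauss k n y) *\<^sub>R quad_dyad \<theta> y
   + (gauss x * gauss y) *\<^sub>R number_part l0 l\<theta> p n)"

lemma psd2_number_part:
  assumes "0 \<le> p" "l0 + l\<theta> + p \<le> 1"
  shows "psd2 (number_part l0 l\<theta> p n)"
  unfolding number_part_def using assms by (intro psd2_diag2) auto

lemma sum_number_part: "(\<Sum>n\<in>{0, 1}. number_part l0 l\<theta> p n) = (1 - l0 - l\<theta>) *\<^sub>R mat 1"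
  by (simp add: number_part_def scaleR_diag2 diag2_add mat_one_eq_diag2 algebra_simps)

lemma psd2_joint_density:
  assumes "0 \<le> l0" "0 \<le> l\<theta>" "0 \<le> p" "l0 + l\<theta> + p \<le> 1" "\<bar>k\<bar> \<le> 1"
  shows "psd2 (joint_density l0 l\<theta> p k \<theta> \<omega>)"
proof -
  obtain n x y where \<omega>: "\<omega> = (n, x, y)"
    by (cases \<omega>) auto
  have "0 \<le> tilted_gauss k n x" "0 \<le> tilted_gauss k n y" "0 \<le> gauss x" "0 \<le> gauss y"
    using assms(5) by (simp_all add: tilted_gauss_nonneg gauss_nonneg)
  then show ?thesis
    unfolding \<omega> joint_density_def prod.case using assms
    by (intro psd2_add psd2_scaleR mult_nonneg_nonneg psd2_number_part)
      (simp_all add: quad_dyad_def psd2_dyad)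
qed

lemma set_integral_joint_density:
  assumes N: "N \<subseteq> {0, 1}" and X: "X \<in> sets borel" and Y: "Y \<in> sets borel"
  shows "set_integrable joint_lborel (N \<times> X \<times> Y) (joint_density l0 l\<theta> p k \<theta>)"
    and "set_lebesgue_integral joint_lborel (N \<times> X \<times> Y) (joint_density l0 l\<theta> p k \<theta>)
      = (\<Sum>n\<in>N. (LINT y:Y|lborel. gauss y) *\<^sub>R (LINT x:X|lborel. (l0 * tilted_gauss k n x) *\<^sub>R quad_dyad 0 x)
          + (LINT x:X|lborel. gauss x) *\<^sub>R
              (LINT y:Y|lborel. (l\<theta> * tilted_gauss k n y) *\<^sub>R quad_dyad \<theta> y + gauss y *\<^sub>R number_part l0 l\<theta> p n))"
proof -
  define A where "A n x = (l0 * tilted_gauss k n x) *\<^sub>R quad_dyad 0 x" for n x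
  define B where "B n y = (l\<theta> * tilted_gauss k n y) *\<^sub>R quad_dyad \<theta> y + gauss y *\<^sub>R number_part l0 l\<theta> p n" for n y
  have split: "joint_density l0 l\<theta> p k \<theta> (n, q) = (case q of (x, y) \<Rightarrow> gauss y *\<^sub>R A n x)
      + (case q of (x, y) \<Rightarrow> gauss x *\<^sub>R B n y)" for n q
    by (cases q) (simp add: joint_density_def A_def B_def scaleR_add_right algebra_simps)
  have gauss: "integrable lborel gauss"
    using integrable_gauss_moment[of 0] by simp
  have AB: "integrable lborel (A n)" "integrable lborel (B n)" for n
    unfolding A_def[abs_def] B_def[abs_def] using gauss
    by (auto intro!: Bochner_Integration.integrable_add integrable_tilted_quad_dyad integrable_scaleR_left)
  note terms = lborel_pair.integral_product_scaleR_swap(1)[OF gauss AB(1)]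
    lborel_pair.integral_product_scaleR(1)[OF gauss AB(2)]
  have XY: "X \<times> Y \<in> sets (lborel \<Otimes>\<^sub>M lborel)"
    using X Y by auto
  have set_terms: "set_integrable (lborel \<Otimes>\<^sub>M lborel) (X \<times> Y) (\<lambda>(x, y). gauss y *\<^sub>R A n x)"
    "set_integrable (lborel \<Otimes>\<^sub>M lborel) (X \<times> Y) (\<lambda>(x, y). gauss x *\<^sub>R B n y)" for n
    using terms XY by (simp_all add: set_integrable_def integrable_mult_indicator)
  have slices: "integrable (lborel \<Otimes>\<^sub>M lborel) (\<lambda>q. joint_density l0 l\<theta> p k \<theta> (n, q))" for n
    unfolding split using terms by (rule Bochner_Integration.integrable_add)
  show "set_integrable joint_lborel (N \<times> X \<times> Y) (joint_density l0 l\<theta> p k \<theta>)"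
    using set_integral_joint_lborel(1)[OF slices N XY] .
  have "set_lebesgue_integral joint_lborel (N \<times> X \<times> Y) (joint_density l0 l\<theta> p k \<theta>)
      = (\<Sum>n\<in>N. set_lebesgue_integral (lborel \<Otimes>\<^sub>M lborel) (X \<times> Y) (\<lambda>q. joint_density l0 l\<theta> p k \<theta> (n, q)))"
    using set_integral_joint_lborel(2)[OF slices N XY] .
  also have "\<dots> = (\<Sum>n\<in>N. (LINT y:Y|lborel. gauss y) *\<^sub>R (LINT x:X|lborel. A n x)
      + (LINT x:X|lborel. gauss x) *\<^sub>R (LINT y:Y|lborel. B n y))"
    unfolding split set_integral_add(2)[OF set_terms]
    using X Y by (intro sum.cong refl arg_cong2[where f="(+)"] gauss AB
        lborel_pair.set_integral_product_scaleR) simp_all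
  finally show "set_lebesgue_integral joint_lborel (N \<times> X \<times> Y) (joint_density l0 l\<theta> p k \<theta>)
      = (\<Sum>n\<in>N. (LINT y:Y|lborel. gauss y) *\<^sub>R (LINT x:X|lborel. (l0 * tilted_gauss k n x) *\<^sub>R quad_dyad 0 x)
          + (LINT x:X|lborel. gauss x) *\<^sub>R
              (LINT y:Y|lborel. (l\<theta> * tilted_gauss k n y) *\<^sub>R quad_dyad \<theta> y + gauss y *\<^sub>R number_part l0 l\<theta> p n))"
    by (simp add: A_def B_def)
qed

lemma num_povm_eq_diag2: "num_povm \<epsilon> n = (if n = 0 then diag2 (1 - \<epsilon>/2) (\<epsilon>/2) else diag2 (\<epsilon>/2) (1 - \<epsilon>/2))"
  by (simp add: num_povm_def diag2_def)

lemma joint_density_number_marginal: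
  assumes "n \<in> {0, 1}" and "p + k * (l0 + l\<theta>) / 3 = 1 - \<epsilon>"
  shows "set_lebesgue_integral joint_lborel ({n} \<times> UNIV \<times> UNIV) (joint_density l0 l\<theta> p k \<theta>)
    = num_povm \<epsilon> n"
proof -
  have "set_lebesgue_integral joint_lborel ({n} \<times> UNIV \<times> UNIV) (joint_density l0 l\<theta> p k \<theta>)
      = (\<integral>x. (l0 * tilted_gauss k n x) *\<^sub>R quad_dyad 0 x \<partial>lborel)
        + (\<integral>y. (l\<theta> * tilted_gauss k n y) *\<^sub>R quad_dyad \<theta> y \<partial>lborel) + number_part l0 l\<theta> p n"
    using set_integral_joint_density(2)[of "{n}" UNIV UNIV] set_integral_tilted_quad_dyad_add[of UNIV] assms(1)
    by (simp add: set_integral_UNIV gauss_moments)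
  also have "\<dots> = num_povm \<epsilon> n"
  proof -
    have p: "p = 1 - \<epsilon> - k * (l0 + l\<theta>) / 3"
      using assms(2) by simp
    show ?thesis
      using assms(1) by (auto simp: integral_tilted_quad_dyad number_part_def num_povm_eq_diag2
          scaleR_diag2 diag2_add diag2_eq_iff p field_simps)
  qed
  finally show ?thesis .
qed

lemma joint_density_quad_marginal_0:
  assumes "X \<in> sets borel"
  shows "set_lebesgue_integral joint_lborel ({0, 1} \<times> X \<times> UNIV) (joint_density l0 l\<theta> p k \<theta>)
    = quad_povm (1 - l0) 0 X"
proof -
  have "set_lebesgue_integral joint_lborel ({0, 1} \<times> X \<times> UNIV) (joint_density l0 l\<theta> p k \<theta>)
      = (\<Sum>n\<in>{0, 1}. (LINT x:X|lborel. (l0 * tilted_gauss k n x) *\<^sub>R quad_dyad 0 x)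
          + (LINT x:X|lborel. gauss x) *\<^sub>R
              ((\<integral>y. (l\<theta> * tilted_gauss k n y) *\<^sub>R quad_dyad \<theta> y \<partial>lborel) + number_part l0 l\<theta> p n))"
    using set_integral_joint_density(2)[of "{0, 1}" X UNIV] set_integral_tilted_quad_dyad_add[of UNIV] assms
    by (simp add: set_integral_UNIV gauss_moments del: sum.insert)
  also have "\<dots> = (\<Sum>n\<in>{0, 1}. LINT x:X|lborel. (l0 * tilted_gauss k n x) *\<^sub>R quad_dyad 0 x)
      + (LINT x:X|lborel. gauss x) *\<^sub>R ((\<Sum>n\<in>{0, 1}. \<integral>y. (l\<theta> * tilted_gauss k n y) *\<^sub>R quad_dyad \<theta> y \<partial>lborel)
           + (\<Sum>n\<in>{0, 1}. number_part l0 l\<theta> p n))"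
    by (simp only: sum.distrib scaleR_sum_right scaleR_add_right)
  also have "\<dots> = quad_povm (1 - l0) 0 X"
    using assms by (simp add: sum_set_integral_tilted_quad_dyad[unfolded One_nat_def]
        sum_integral_tilted_quad_dyad[unfolded One_nat_def] sum_number_part[unfolded One_nat_def]
        quad_povm_eq algebra_simps del: sum.insert)
  finally show ?thesis .
qed

lemma joint_density_quad_marginal_\<theta>:
  assumes "Y \<in> sets borel"
  shows "set_lebesgue_integral joint_lborel ({0, 1} \<times> UNIV \<times> Y) (joint_density l0 l\<theta> p k \<theta>)
    = quad_povm (1 - l\<theta>) \<theta> Y"
proof -
  have "set_lebesgue_integral joint_lborel ({0, 1} \<times> UNIV \<times> Y) (joint_density l0 l\<theta> p k \<theta>)
      = (\<Sum>n\<in>{0, 1}. (LINT y:Y|lborel. gauss y) *\<^sub>R (\<integral>x. (l0 * tilted_gauss k n x) *\<^sub>R quad_dyad 0 x \<partial>lborel)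
          + ((LINT y:Y|lborel. (l\<theta> * tilted_gauss k n y) *\<^sub>R quad_dyad \<theta> y)
             + (LINT y:Y|lborel. gauss y) *\<^sub>R number_part l0 l\<theta> p n))"
    using set_integral_joint_density(2)[of "{0, 1}" UNIV Y] set_integral_tilted_quad_dyad_add[of Y] assms
    by (simp add: set_integral_UNIV gauss_moments del: sum.insert)
  also have "\<dots> = (LINT y:Y|lborel. gauss y) *\<^sub>R ((\<Sum>n\<in>{0, 1}. \<integral>x. (l0 * tilted_gauss k n x) *\<^sub>R quad_dyad 0 x \<partial>lborel)
           + (\<Sum>n\<in>{0, 1}. number_part l0 l\<theta> p n))
      + (\<Sum>n\<in>{0, 1}. LINT y:Y|lborel. (l\<theta> * tilted_gauss k n y) *\<^sub>R quad_dyad \<theta> y)"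
    by (simp only: sum.distrib scaleR_sum_right scaleR_add_right ac_simps)
  also have "\<dots> = quad_povm (1 - l\<theta>) \<theta> Y"
    using assms by (simp add: sum_set_integral_tilted_quad_dyad[unfolded One_nat_def]
        sum_integral_tilted_quad_dyad[unfolded One_nat_def] sum_number_part[unfolded One_nat_def]
        quad_povm_eq algebra_simps del: sum.insert)
  finally show ?thesis .
qed

lemma jointly_measurable_prono_of_weights:
  assumes "\<epsilon>0 \<le> 1" "\<epsilon>\<theta> \<le> 1" "0 \<le> p" "p \<le> \<epsilon>0 + \<epsilon>\<theta> - 1" "\<bar>k\<bar> \<le> 1"
    and "p + k * (2 - \<epsilon>0 - \<epsilon>\<theta>) / 3 = 1 - \<epsilon>"
  shows "jointly_measurable_prono \<epsilon> \<epsilon>0 \<epsilon>\<theta> \<theta>"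
proof -
  define D where "D = joint_density (1 - \<epsilon>0) (1 - \<epsilon>\<theta>) p k \<theta>"
  have "povm joint_space (\<lambda>S. set_lebesgue_integral joint_lborel S D)"
  proof (rule povm_set_integral[OF sets_joint_lborel[symmetric]])
    have "set_integrable joint_lborel (space joint_lborel) D"
      unfolding D_def space_joint_lborel by (rule set_integral_joint_density(1)) simp_all
    moreover have "set_integrable joint_lborel (space joint_lborel) D \<longleftrightarrow> integrable joint_lborel D"
      unfolding set_integrable_def by (rule Bochner_Integration.integrable_cong) simp_all
    ultimately show "integrable joint_lborel D"
      by simp
    show "psd2 (D \<omega>)" for \<omega>
      unfolding D_def using assms(1-5) by (intro psd2_joint_density) auto
    show "set_lebesgue_integral joint_lborel (space joint_lborel) D = mat 1"
      unfolding D_def space_joint_lborel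
      using joint_density_quad_marginal_0[of UNIV] by (simp add: quad_povm_UNIV)
  qed
  moreover have "num_povm \<epsilon> n = set_lebesgue_integral joint_lborel ({n} \<times> UNIV \<times> UNIV) D"
    if "n \<in> {0, 1}" for n
    unfolding D_def using that assms(6) by (subst joint_density_number_marginal) (auto simp: field_simps)
  moreover have "quad_povm \<epsilon>0 0 X = set_lebesgue_integral joint_lborel ({0, 1} \<times> X \<times> UNIV) D"
    if "X \<in> sets borel" for X
    unfolding D_def using joint_density_quad_marginal_0[OF that] by simp
  moreover have "quad_povm \<epsilon>\<theta> \<theta> Y = set_lebesgue_integral joint_lborel ({0, 1} \<times> UNIV \<times> Y) D"
    if "Y \<in> sets borel" for Y
    unfolding D_def using joint_density_quad_marginal_\<theta>[OF that] by simp
  ultimately show ?thesis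
    unfolding jointly_measurable_prono_def by blast
qed

theorem mainTheorem6:
  fixes \<epsilon> \<epsilon>0 \<epsilon>\<theta> \<theta> :: real
  assumes "\<epsilon> \<in> {0..1}" and "\<epsilon>0 \<in> {0..1}" and "\<epsilon>\<theta> \<in> {0..1}"
  shows "(\<epsilon> / (2 - \<epsilon>) + \<epsilon>0 + \<epsilon>\<theta> - 2 \<ge> 0 \<longrightarrow> jointly_measurable_prono \<epsilon> \<epsilon>0 \<epsilon>\<theta> \<theta>)
       \<and> (\<epsilon> = \<epsilon>0 \<and> \<epsilon>0 = \<epsilon>\<theta> \<and> \<epsilon> \<ge> 4/7 \<longrightarrow> jointly_measurable_prono \<epsilon> \<epsilon>0 \<epsilon>\<theta> \<theta>)"
proof (intro conjI impI)
  assume "\<epsilon> / (2 - \<epsilon>) + \<epsilon>0 + \<epsilon>\<theta> - 2 \<ge> 0"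
  moreover have "\<epsilon> / (2 - \<epsilon>) \<le> \<epsilon>"
    using assms(1) mult_left_mono[of 1 "2 - \<epsilon>" \<epsilon>] by (simp add: divide_le_eq)
  ultimately show "jointly_measurable_prono \<epsilon> \<epsilon>0 \<epsilon>\<theta> \<theta>"
    using assms by (intro jointly_measurable_prono_of_weights[where p = "1 - \<epsilon>" and k = 0]) auto
next
  assume "\<epsilon> = \<epsilon>0 \<and> \<epsilon>0 = \<epsilon>\<theta> \<and> \<epsilon> \<ge> 4/7"
  then show "jointly_measurable_prono \<epsilon> \<epsilon>0 \<epsilon>\<theta> \<theta>"
    using assms by (intro jointly_measurable_prono_of_weights[where p = "(1 - \<epsilon>) / 3" and k = 1])
      (auto simp: field_simps)
qed

end
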